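(* Let $(A,\cdot,\alpha)$ be a Hom-associative algebra, $(V,l,r,\beta)$ an $A$-bimodule and $T:V\to A$ an $\mathcal{O}$-operator associated to $(V,l,r,\beta)$. Define $u\triangleright v:=l(T(u))v$ and $u\triangleleft v:=r(T(v))u$ for $u,v\in V$. Then $(V,\triangleright,\triangleleft,\beta)$ is a Hom-$L$-dendriform algebra.
   Context: A Hom-associative algebra $(A,\cdot,\alpha)$: $\cdot$ bilinear, $\alpha$ linear, $(x\cdot y)\cdot\alpha(z)=\alpha(x)\cdot(y\cdot z)$. An $A$-bimodule $(V,l,r,\beta)$: a vector space $V$, linear $\beta:V\to V$, linear maps $l,r:A\to\mathfrak{gl}(V)$ with $l(x\cdot y)\beta=l(\alpha(x))l(y)$, $r(\alpha(y))l(x)=l(\alpha(x))r(y)$, $r(\alpha(y))r(x)=r(x\cdot y)\beta$ for all $x,y\in A$. An $\mathcal{O}$-operator associated to $(V,l,r,\beta)$ is a linear $T:V\to A$ with $\alpha T=T\beta$ and $T(u)\cdot T(v)=T(l(T(u))v+r(T(v))u)$ for all $u,v\in V$. A Hom-$L$-dendriform algebra is a vector space $V$ with bilinear $\triangleleft,\triangleright$ and linear $\beta$ such that for all $u,v,w$: $\beta(u)\triangleright(v\triangleright w)=(u\triangleright v)\triangleright\beta(w)+(u\triangleleft v)\triangleright\beta(w)+\beta(v)\triangleright(u\triangleright w)-(v\triangleleft u)\triangleright\beta(w)-(v\triangleright u)\triangleright\beta(w)$ and $\beta(u)\triangleright(v\triangleleft w)=(u\triangleright v)\triangleleft\beta(w)+\beta(v)\triangleleft(u\triangleright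 w)+\beta(v)\triangleleft(u\triangleleft w)-(v\triangleleft u)\triangleleft\beta(w)$. *)

theory Defs
  imports Complex_Main
begin

definition bilinear_map ::
  "('k::field \<Rightarrow> 'a::ab_group_add \<Rightarrow> 'a) \<Rightarrow> ('k \<Rightarrow> 'b::ab_group_add \<Rightarrow> 'b) \<Rightarrow>
   ('k \<Rightarrow> 'c::ab_group_add \<Rightarrow> 'c) \<Rightarrow> ('a \<Rightarrow> 'b \<Rightarrow> 'c) \<Rightarrow> bool" where
  "bilinear_map s1 s2 s3 f \<longleftrightarrow>
     (\<forall>x::'a. Vector_Spaces.linear s2 s3 (f x)) \<and> (\<forall>y::'b. Vector_Spaces.linear s1 s3 (\<lambda>x. f x y))"

definition hom_assoc_algebra ::
  "('k::field \<Rightarrow> 'a::ab_group_add \<Rightarrow> 'a) \<Rightarrow> ('a \<Rightarrow> 'a \<Rightarrow> 'a) \<Rightarrow> ('a \<Rightarrow> 'a) \<Rightarrow> bool" where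
  "hom_assoc_algebra sA mult \<alpha> \<longleftrightarrow>
     vector_space sA \<and> bilinear_map sA sA sA mult \<and> Vector_Spaces.linear sA sA \<alpha> \<and>
     (\<forall>x y z. mult (mult x y) (\<alpha> z) = mult (\<alpha> x) (mult y z))"

definition hom_bimodule ::
  "('k::field \<Rightarrow> 'a::ab_group_add \<Rightarrow> 'a) \<Rightarrow> ('a \<Rightarrow> 'a \<Rightarrow> 'a) \<Rightarrow> ('a \<Rightarrow> 'a) \<Rightarrow>
   ('k \<Rightarrow> 'v::ab_group_add \<Rightarrow> 'v) \<Rightarrow> ('a \<Rightarrow> 'v \<Rightarrow> 'v) \<Rightarrow> ('a \<Rightarrow> 'v \<Rightarrow> 'v) \<Rightarrow> ('v \<Rightarrow> 'v) \<Rightarrow> bool" where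
  "hom_bimodule sA mult \<alpha> sV l r \<beta> \<longleftrightarrow>
     vector_space sV \<and> Vector_Spaces.linear sV sV \<beta> \<and>
     bilinear_map sA sV sV l \<and> bilinear_map sA sV sV r \<and>
     (\<forall>x y v. l (mult x y) (\<beta> v) = l (\<alpha> x) (l y v)) \<and>
     (\<forall>x y v. r (\<alpha> y) (l x v) = l (\<alpha> x) (r y v)) \<and>
     (\<forall>x y v. r (\<alpha> y) (r x v) = r (mult x y) (\<beta> v))"

definition O_operator ::
  "('k::field \<Rightarrow> 'a::ab_group_add \<Rightarrow> 'a) \<Rightarrow> ('a \<Rightarrow> 'a \<Rightarrow> 'a) \<Rightarrow> ('a \<Rightarrow> 'a) \<Rightarrow>
   ('k \<Rightarrow> 'v::ab_group_add \<Rightarrow> 'v) \<Rightarrow> ('a \<Rightarrow> 'v \<Rightarrow> 'v) \<Rightarrow> ('a \<Rightarrow> 'v \<Rightarrow> 'v) \<Rightarrow> ('v \<Rightarrow> 'v) \<Rightarrow>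
   ('v \<Rightarrow> 'a) \<Rightarrow> bool" where
  "O_operator sA mult \<alpha> sV l r \<beta> T \<longleftrightarrow>
     Vector_Spaces.linear sV sA T \<and> (\<forall>v. \<alpha> (T v) = T (\<beta> v)) \<and>
     (\<forall>u v. mult (T u) (T v) = T (l (T u) v + r (T v) u))"

text \<open>Hom-L-dendriform algebra (V, \<triangleleft>=lt, \<triangleright>=gt, \<beta>).\<close>
definition hom_L_dendriform ::
  "('k::field \<Rightarrow> 'v::ab_group_add \<Rightarrow> 'v) \<Rightarrow> ('v \<Rightarrow> 'v \<Rightarrow> 'v) \<Rightarrow> ('v \<Rightarrow> 'v \<Rightarrow> 'v) \<Rightarrow> ('v \<Rightarrow> 'v) \<Rightarrow> bool" where
  "hom_L_dendriform sV gt lt \<beta> \<longleftrightarrow>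
     vector_space sV \<and> bilinear_map sV sV sV gt \<and> bilinear_map sV sV sV lt \<and>
     Vector_Spaces.linear sV sV \<beta> \<and>
     (\<forall>u v w. gt (\<beta> u) (gt v w) =
        gt (gt u v) (\<beta> w) + gt (lt u v) (\<beta> w) + gt (\<beta> v) (gt u w)
        - gt (lt v u) (\<beta> w) - gt (gt v u) (\<beta> w)) \<and>
     (\<forall>u v w. gt (\<beta> u) (lt v w) =
        lt (gt u v) (\<beta> w) + lt (\<beta> v) (gt u w) + lt (\<beta> v) (lt u w)
        - lt (lt v u) (\<beta> w))"

end

theory Submission
  imports Defs
begin

text \<open>Both identities come from one observation: by the \<open>\<O>\<close>-operator identity,
  \<open>u \<triangleright> v + u \<triangleleft> v\<close> is mapped by \<open>T\<close> to \<open>T u \<cdot> T v\<close>, so the bimodule axioms for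
  \<open>l (x \<cdot> y) \<beta>\<close> and \<open>r (x \<cdot> y) \<beta>\<close> turn a sum of two terms of the dendriform
  identities into a single iterated action.\<close>

lemma bilinear_map_add_left:
  "bilinear_map s1 s2 s3 f \<Longrightarrow> f (x + x') y = f x y + f x' y"
  unfolding bilinear_map_def Vector_Spaces.linear_iff by blast

lemma bilinear_map_compose_left:
  assumes "bilinear_map s1 s2 s3 f" and "Vector_Spaces.linear s0 s1 g"
  shows "bilinear_map s0 s2 s3 (\<lambda>x. f (g x))"
proof -
  have "Vector_Spaces.linear s0 s3 ((\<lambda>x. f x y) \<circ> g)" for y
    using assms by (intro Vector_Spaces.linear_compose) (auto simp: bilinear_map_def)
  then show ?thesis
    using assms(1) by (simp add: bilinear_map_def o_def)
qed

lemma bilinear_map_swap: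
  "bilinear_map s1 s2 s3 f \<Longrightarrow> bilinear_map s2 s1 s3 (\<lambda>y x. f x y)"
  unfolding bilinear_map_def by blast

lemma O_operator_left_action_beta:
  assumes "hom_bimodule sA mult \<alpha> sV l r \<beta>" and "O_operator sA mult \<alpha> sV l r \<beta> T"
  shows "l (T (l (T u) v + r (T v) u)) (\<beta> w) = l (T (\<beta> u)) (l (T v) w)"
proof -
  have "l (T (l (T u) v + r (T v) u)) (\<beta> w) = l (mult (T u) (T v)) (\<beta> w)"
    using assms(2) by (simp add: O_operator_def)
  also have "\<dots> = l (\<alpha> (T u)) (l (T v) w)"
    using assms(1) by (simp add: hom_bimodule_def)
  finally show ?thesis
    using assms(2) by (simp add: O_operator_def)
qed

lemma O_operator_right_action_beta:
  assumes "hom_bimodule sA mult \<alpha> sV l r \<beta>" and "O_operator sA mult \<alpha> sV l r \<beta> T"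
  shows "r (T (l (T u) w + r (T w) u)) (\<beta> v) = r (T (\<beta> w)) (r (T u) v)"
proof -
  have "r (T (l (T u) w + r (T w) u)) (\<beta> v) = r (mult (T u) (T w)) (\<beta> v)"
    using assms(2) by (simp add: O_operator_def)
  also have "\<dots> = r (\<alpha> (T w)) (r (T u) v)"
    using assms(1) by (simp add: hom_bimodule_def)
  finally show ?thesis
    using assms(2) by (simp add: O_operator_def)
qed

lemma O_operator_dendriform_left_identity:
  assumes bimod: "hom_bimodule sA mult \<alpha> sV l r \<beta>" and O: "O_operator sA mult \<alpha> sV l r \<beta> T"
  shows "l (T (\<beta> u)) (l (T v) w) =
    l (T (l (T u) v)) (\<beta> w) + l (T (r (T v) u)) (\<beta> w) + l (T (\<beta> v)) (l (T u) w)
    - l (T (r (T u) v)) (\<beta> w) - l (T (l (T v) u)) (\<beta> w)"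
proof -
  have T_add: "T (x + y) = T x + T y" for x y
    using O by (simp add: O_operator_def Vector_Spaces.linear_iff)
  have l_add: "l (x + y) z = l x z + l y z" for x y z
    using bimod bilinear_map_add_left[of sA sV sV l] by (simp add: hom_bimodule_def)
  have uv: "l (T (l (T u) v)) (\<beta> w) + l (T (r (T v) u)) (\<beta> w) = l (T (\<beta> u)) (l (T v) w)"
    using O_operator_left_action_beta[OF bimod O, of u v w] by (simp add: T_add l_add)
  have vu: "l (T (r (T u) v)) (\<beta> w) + l (T (l (T v) u)) (\<beta> w) = l (T (\<beta> v)) (l (T u) w)"
    using O_operator_left_action_beta[OF bimod O, of v u w] by (simp add: T_add l_add add.commute)
  show ?thesis
    by (simp add: uv[symmetric] vu[symmetric] algebra_simps)
qed

lemma O_operator_dendriform_right_identity: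
  assumes bimod: "hom_bimodule sA mult \<alpha> sV l r \<beta>" and O: "O_operator sA mult \<alpha> sV l r \<beta> T"
  shows "l (T (\<beta> u)) (r (T w) v) =
    r (T (\<beta> w)) (l (T u) v) + r (T (l (T u) w)) (\<beta> v) + r (T (r (T w) u)) (\<beta> v)
    - r (T (\<beta> w)) (r (T u) v)"
proof -
  have T_add: "T (x + y) = T x + T y" for x y
    using O by (simp add: O_operator_def Vector_Spaces.linear_iff)
  have r_add: "r (x + y) z = r x z + r y z" for x y z
    using bimod bilinear_map_add_left[of sA sV sV r] by (simp add: hom_bimodule_def)
  have "r (T (l (T u) w)) (\<beta> v) + r (T (r (T w) u)) (\<beta> v) = r (T (\<beta> w)) (r (T u) v)"
    using O_operator_right_action_beta[OF bimod O, of u w v] by (simp add: T_add r_add)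
  moreover have "r (T (\<beta> w)) (l (T u) v) = l (T (\<beta> u)) (r (T w) v)"
  proof -
    have "r (\<alpha> (T w)) (l (T u) v) = l (\<alpha> (T u)) (r (T w) v)"
      using bimod by (simp add: hom_bimodule_def)
    then show ?thesis
      using O by (simp add: O_operator_def)
  qed
  ultimately show ?thesis
    by (simp add: algebra_simps)
qed

theorem mainTheorem17:
  fixes sA :: "'k::field \<Rightarrow> 'a::ab_group_add \<Rightarrow> 'a"
    and sV :: "'k \<Rightarrow> 'v::ab_group_add \<Rightarrow> 'v"
    and mult :: "'a \<Rightarrow> 'a \<Rightarrow> 'a" and \<alpha> :: "'a \<Rightarrow> 'a"
    and l r :: "'a \<Rightarrow> 'v \<Rightarrow> 'v" and \<beta> :: "'v \<Rightarrow> 'v" and T :: "'v \<Rightarrow> 'a"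
  assumes "hom_assoc_algebra sA mult \<alpha>"
    and "hom_bimodule sA mult \<alpha> sV l r \<beta>"
    and "O_operator sA mult \<alpha> sV l r \<beta> T"
  shows "hom_L_dendriform sV (\<lambda>u v. l (T u) v) (\<lambda>u v. r (T v) u) \<beta>"
proof -
  have T: "Vector_Spaces.linear sV sA T"
    using assms(3) by (simp add: O_operator_def)
  have l: "bilinear_map sA sV sV l" and r: "bilinear_map sA sV sV r"
    and "vector_space sV" and "Vector_Spaces.linear sV sV \<beta>"
    using assms(2) by (simp_all add: hom_bimodule_def)
  moreover note bilinear_map_compose_left[OF l T]
    and bilinear_map_swap[OF bilinear_map_compose_left[OF r T]]
  ultimately show ?thesis
    unfolding hom_L_dendriform_def
    by (intro conjI allI O_operator_dendriform_left_identity[OF assms(2,3)]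
        O_operator_dendriform_right_identity[OF assms(2,3)]) simp_all
qed

end
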